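(* Let $k\in\mathbb{Z}$. For all positive integers $x,n$, $$(-1)^{x-1}G_{n}^{(k)}(x)+G_{n}^{(k)}=2\sum_{m=1}^{n}\sum_{j=1}^{m}\sum_{i=0}^{x-1}(-1)^{i}i^{n-m}\binom{n}{m}\frac{S_{1}(m,j)}{j^{k-1}}.$$
   Context: Convention: $0^0=1$. For $k\in\mathbb{Z}$, $\mathrm{Ei}_k(x)=\sum_{n=1}^{\infty}\frac{x^n}{n^k(n-1)!}$. The poly-Genocchi polynomials $G_n^{(k)}(x)$ are defined by $\frac{2\,\mathrm{Ei}_k(\log(1+t))}{e^t+1}e^{xt}=\sum_{n=0}^{\infty}G_n^{(k)}(x)\frac{t^n}{n!}$, and $G_n^{(k)}=G_n^{(k)}(0)$. $S_1(n,m)$ are the signed Stirling numbers of the first kind: $\frac{(\log(1+t))^m}{m!}=\sum_{n=m}^{\infty}S_1(n,m)\frac{t^n}{n!}$. *)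

theory Defs
  imports Complex_Main "HOL-Computational_Algebra.Formal_Power_Series"
begin

definition poly_Ei_fps :: "int \<Rightarrow> real fps" where
  "poly_Ei_fps k = Abs_fps (\<lambda>n. if n = 0 then 0
       else 1 / ((real n powi k) * fact (n - 1)))"

(* generating function  2 Ei_k(log(1+t)) / (e^t + 1) * e^{x t};  fps_ln 1 = log(1+t) *)
definition poly_Genocchi_gf :: "int \<Rightarrow> real \<Rightarrow> real fps" where
  "poly_Genocchi_gf k x =
     fps_const 2 * (poly_Ei_fps k oo fps_ln 1) / (fps_exp 1 + 1) * fps_exp x"

definition poly_Genocchi :: "int \<Rightarrow> nat \<Rightarrow> real \<Rightarrow> real" where
  "poly_Genocchi k n x = fact n * fps_nth (poly_Genocchi_gf k x) n"

(* signed Stirling numbers of the first kind: (log(1+t))^m / m! = sum_n S1(n,m) t^n / n! *)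
definition S1 :: "nat \<Rightarrow> nat \<Rightarrow> real" where
  "S1 n m = fact n * fps_nth ((fps_ln 1) ^ m / fps_const (fact m)) n"

end

theory Submission
  imports Defs
begin

unbundle fps_syntax

text \<open>Write E = Ei_k(log(1 + t)), so that the generating function of G_n^(k)(x) is
  2 E e^(x t) / (e^t + 1). The geometric sum (e^t + 1) * Sum_{i<x} (-1)^i e^(i t) = 1 - (-e^t)^x
  cancels the denominator, hence G_n^(k) - (-1)^x G_n^(k)(x) is n! times the n-th coefficient of
  2 E * Sum_{i<x} (-1)^i e^(i t). Both factors have explicit coefficients: expanding Ei_k in
  powers of log(1 + t) brings in the Stirling numbers S_1(m, j), and the Cauchy product of the
  two exponential generating functions brings in the binomial coefficients.\<close>

lemma fps_nth_divide_fps_const: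
  fixes c :: "'a::field"
  assumes "c \<noteq> 0"
  shows "(f / fps_const c) $ n = f $ n / c"
  using assms by (simp add: fps_divide_unit fps_const_inverse divide_inverse)

lemma fact_mult_fps_mult_nth:
  fixes f g :: "'a::field_char_0 fps"
  shows "fact n * (f * g) $ n =
    (\<Sum>m\<le>n. of_nat (n choose m) * (fact m * f $ m) * (fact (n - m) * g $ (n - m)))"
proof -
  have "fact n * (f $ m * g $ (n - m))
      = of_nat (n choose m) * (fact m * f $ m) * (fact (n - m) * g $ (n - m))" if "m \<le> n" for m
    using that by (simp add: binomial_fact)
  then show ?thesis
    unfolding fps_mult_nth atLeast0AtMost sum_distrib_left by (intro sum.cong) auto
qed

lemma S1_conv_fps_ln_power_nth: "S1 m j = fact m / fact j * (fps_ln 1 ^ j) $ m"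
  unfolding S1_def by (simp add: fps_nth_divide_fps_const divide_inverse)

lemma fact_mult_poly_Ei_fps_compose_ln_nth:
  "fact m * (poly_Ei_fps k oo fps_ln 1) $ m = (\<Sum>j = 1..m. S1 m j / real j powi (k - 1))"
proof -
  have Ei_coeff: "fact m * poly_Ei_fps k $ j * (fps_ln 1 ^ j) $ m = S1 m j / real j powi (k - 1)"
    if "j \<ge> 1" for j
  proof -
    have "(fact j :: real) = real j * fact (j - 1)"
      using that by (simp add: fact_reduce)
    moreover have "real j powi (k - 1) = real j powi k / real j"
      using that by (simp add: power_int_diff)
    ultimately show ?thesis
      using that by (simp add: poly_Ei_fps_def S1_conv_fps_ln_power_nth)
  qed
  have "fact m * (poly_Ei_fps k oo fps_ln 1) $ m
      = (\<Sum>j = 0..m. fact m * poly_Ei_fps k $ j * (fps_ln 1 ^ j) $ m)"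
    by (simp add: fps_compose_nth sum_distrib_left mult.assoc)
  also have "\<dots> = (\<Sum>j = 1..m. fact m * poly_Ei_fps k $ j * (fps_ln 1 ^ j) $ m)"
    by (rule sum.mono_neutral_right) (auto simp: poly_Ei_fps_def)
  also have "\<dots> = (\<Sum>j = 1..m. S1 m j / real j powi (k - 1))"
    using Ei_coeff by (intro sum.cong) auto
  finally show ?thesis .
qed

lemma fps_exp_plus_one_mult_alternating_sum:
  "(fps_exp 1 + 1) * (\<Sum>i<x. fps_const ((-1) ^ i) * fps_exp (of_nat i))
    = 1 - fps_const ((-1) ^ x) * fps_exp (of_nat x :: 'a::field_char_0)"
proof -
  have sign: "fps_const ((-1) ^ i) = ((-1) ^ i :: 'a fps)" for i
    by (metis fps_const_neg fps_const_1_eq_1 fps_const_power)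
  have alternating_exp: "fps_const ((-1) ^ i) * fps_exp (of_nat i) = (- fps_exp (1::'a)) ^ i" for i
    by (simp add: sign power_minus[of "fps_exp 1"] fps_exp_power_mult)
  have "(fps_exp 1 + 1) * (\<Sum>i<x. (- fps_exp (1::'a)) ^ i) = 1 - (- fps_exp 1) ^ x"
    by (simp only: one_diff_power_eq diff_minus_eq_add add.commute)
  then show ?thesis
    by (simp only: alternating_exp)
qed

lemma poly_Genocchi_gf_0_minus_alternating:
  "poly_Genocchi_gf k 0 - fps_const ((-1) ^ x) * poly_Genocchi_gf k (real x)
    = fps_const 2 * (poly_Ei_fps k oo fps_ln 1)
        * (\<Sum>i<x. fps_const ((-1) ^ i) * fps_exp (real i))"
proof -
  define D :: "real fps" where "D = fps_exp 1 + 1"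
  have D_inverse: "inverse D * D = 1"
    by (simp add: D_def inverse_mult_eq_1)
  have "poly_Genocchi_gf k y = fps_const 2 * (poly_Ei_fps k oo fps_ln 1) * inverse D * fps_exp y"
    for y
    by (simp add: poly_Genocchi_gf_def D_def fps_divide_unit)
  then have "poly_Genocchi_gf k 0 - fps_const ((-1) ^ x) * poly_Genocchi_gf k (real x)
      = fps_const 2 * (poly_Ei_fps k oo fps_ln 1) * inverse D
          * (1 - fps_const ((-1) ^ x) * fps_exp (real x))"
    by (simp add: algebra_simps)
  also have "1 - fps_const ((-1) ^ x) * fps_exp (real x)
      = D * (\<Sum>i<x. fps_const ((-1) ^ i) * fps_exp (real i))"
    unfolding D_def by (rule fps_exp_plus_one_mult_alternating_sum[symmetric])
  finally show ?thesis
    using D_inverse by (simp add: mult_ac)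
qed

lemma poly_Genocchi_0_minus_alternating:
  "poly_Genocchi k n 0 - (-1) ^ x * poly_Genocchi k n (real x)
    = 2 * (\<Sum>m = 1..n. real (n choose m) * (\<Sum>j = 1..m. S1 m j / real j powi (k - 1))
                        * (\<Sum>i<x. (-1) ^ i * real i ^ (n - m)))"
proof -
  define E where "E = poly_Ei_fps k oo fps_ln (1::real)"
  define A where "A = (\<Sum>i<x. fps_const ((-1::real) ^ i) * fps_exp (real i))"
  have A_coeff: "fact q * A $ q = (\<Sum>i<x. (-1) ^ i * real i ^ q)" for q
    by (simp add: A_def fps_sum_nth sum_distrib_left)
  have "poly_Genocchi k n 0 - (-1) ^ x * poly_Genocchi k n (real x)
      = fact n * (poly_Genocchi_gf k 0 - fps_const ((-1) ^ x) * poly_Genocchi_gf k (real x)) $ n"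
    by (simp add: poly_Genocchi_def right_diff_distrib mult.left_commute)
  also have "\<dots> = fact n * (fps_const 2 * (E * A)) $ n"
    by (simp only: poly_Genocchi_gf_0_minus_alternating E_def A_def mult.assoc)
  also have "\<dots> = 2 * (fact n * (E * A) $ n)"
    by simp
  also have "\<dots> = 2 * (\<Sum>m\<le>n. real (n choose m) * (fact m * E $ m) * (fact (n - m) * A $ (n - m)))"
    by (simp only: fact_mult_fps_mult_nth)
  \<comment> \<open>the \<open>m = 0\<close> term vanishes because \<open>Ei\<^sub>k\<close> has no constant term\<close>
  also have "\<dots> = 2 * (\<Sum>m = 1..n. real (n choose m) * (fact m * E $ m) * (fact (n - m) * A $ (n - m)))"
    by (simp add: atMost_atLeast0 sum.atLeast_Suc_atMost E_def fact_mult_poly_Ei_fps_compose_ln_nth)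
  finally show ?thesis
    by (simp only: E_def fact_mult_poly_Ei_fps_compose_ln_nth A_coeff)
qed

theorem theorem4:
  fixes k :: int and x n :: nat
  assumes "x \<ge> 1" and "n \<ge> 1"
  shows "(-1) ^ (x - 1) * poly_Genocchi k n (real x) + poly_Genocchi k n 0 =
    2 * (\<Sum>m = 1..n. \<Sum>j = 1..m. \<Sum>i = 0..x - 1.
          (-1) ^ i * (real i) ^ (n - m) * real (n choose m) * S1 m j / (real j powi (k - 1)))"
proof -
  have "(-1) ^ (x - 1) = - ((-1) ^ x :: real)" and "{0..x - 1} = {..<x}"
    using \<open>x \<ge> 1\<close> by (auto simp: power_eq_if)
  then show ?thesis
    using poly_Genocchi_0_minus_alternating[of k n x]
    by (simp add: sum_distrib_left sum_distrib_right sum_divide_distrib mult_ac)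
qed

end
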